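(* Consider an instance of the robust flow design problem on a directed graph $D=(V,A)$ with source $s$, sink $t$, capacities $u\in\mathbb{R}_+^A$, protection cost coefficients $\gamma\in\mathbb{R}_+^A$, flow player budget $B_F>0$ and interdictor budget $B_I\ge0$. There exists an optimal solution $(x^*,c^* )$ such that for all $e\in A^*$, $$c^*_e=\begin{cases}\dfrac{B_F}{\Gamma(x^* )}&\text{if there exists }P\in\mathcal{P}\text{ with }e\in P\text{ and }x^*_P>0,\\[1ex] 0&\text{otherwise,}\end{cases}$$ where $\Gamma(x):=\sum_{P\in\mathcal{P}}\sum_{e\in P}\gamma_e x_P$.
   Context: $\mathcal{P}$ is the set of $s$-$t$-paths in $D$ and $X=\{x\in\mathbb{R}_+^{\mathcal{P}}:\sum_{P\ni e}x_P\le u_e\ \forall e\in A\}$. $A^*=\{e\in A:\gamma_e>0\}$. In the design problem the flow player chooses $x\in X$ and interdiction costs $c\in\mathbb{R}_+^A$ subject to $\sum_{e\in A}\gamma_e c_e\sum_{P\in\mathcal{P}:e\in P}x_P\le B_F$; for arcs with $\gamma_e=0$ one has $c_e=\infty$ (flow cannot be stolen there). The interdictor then chooses $z\in\mathbb{R}_+^{A\times\mathcal{P}}$ with $\sum_{e\in A}c_e\sum_{P\ni e}z_{e,P}\le B_I$ (and $z_{e,P}=0$ if $c_e=\infty$), and the value is $\mathrm{val}(x,z)=\sum_{P\in\mathcal{P}}(x_P-\sum_{e\in P}z_{e,P})^+$. An optimal solution is a feasible pair $(x,c)$ maximizing $\min_z\mathrm{val}(x,z)$. *)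

theory Defs
  imports Main "Graph_Theory.Digraph" "Graph_Theory.Arc_Walk"
begin

text \<open>Flow values x and interdiction costs c are total functions; only their values
on s-t paths, resp. on arcs of A*, are meaningful. For arcs outside A* the
cost is infinity, which is encoded by excluding those arcs from the budget sums
and forcing the interdiction z to vanish there.\<close>

definition st_paths :: "('a,'b) pre_digraph \<Rightarrow> 'a \<Rightarrow> 'a \<Rightarrow> 'b list set" where
  "st_paths G s t = {p. pre_digraph.apath G s p t}"

definition Astar :: "('a,'b) pre_digraph \<Rightarrow> ('b \<Rightarrow> real) \<Rightarrow> 'b set" where
  "Astar G \<gamma> = {e \<in> arcs G. \<gamma> e > 0}"

definition arc_load :: "('a,'b) pre_digraph \<Rightarrow> 'a \<Rightarrow> 'a \<Rightarrow> ('b list \<Rightarrow> real) \<Rightarrow> 'b \<Rightarrow> real" where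
  "arc_load G s t x e = (\<Sum>P\<in>{P \<in> st_paths G s t. e \<in> set P}. x P)"

definition flow_feasible ::
  "('a,'b) pre_digraph \<Rightarrow> 'a \<Rightarrow> 'a \<Rightarrow> ('b \<Rightarrow> real) \<Rightarrow> ('b list \<Rightarrow> real) \<Rightarrow> bool" where
  "flow_feasible G s t u x \<longleftrightarrow>
     (\<forall>P\<in>st_paths G s t. 0 \<le> x P) \<and> (\<forall>e\<in>arcs G. arc_load G s t x e \<le> u e)"

definition design_feasible ::
  "('a,'b) pre_digraph \<Rightarrow> 'a \<Rightarrow> 'a \<Rightarrow> ('b \<Rightarrow> real) \<Rightarrow> ('b \<Rightarrow> real) \<Rightarrow> real
    \<Rightarrow> ('b list \<Rightarrow> real) \<Rightarrow> ('b \<Rightarrow> real) \<Rightarrow> bool" where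
  "design_feasible G s t u \<gamma> BF x c \<longleftrightarrow>
     flow_feasible G s t u x \<and> (\<forall>e\<in>Astar G \<gamma>. 0 \<le> c e) \<and>
     (\<Sum>e\<in>Astar G \<gamma>. \<gamma> e * c e * arc_load G s t x e) \<le> BF"

definition interdiction_feasible ::
  "('a,'b) pre_digraph \<Rightarrow> 'a \<Rightarrow> 'a \<Rightarrow> ('b \<Rightarrow> real) \<Rightarrow> real \<Rightarrow> ('b \<Rightarrow> real)
    \<Rightarrow> ('b \<times> 'b list \<Rightarrow> real) \<Rightarrow> bool" where
  "interdiction_feasible G s t \<gamma> BI c z \<longleftrightarrow>
     (\<forall>e\<in>arcs G. \<forall>P\<in>st_paths G s t. 0 \<le> z (e, P)) \<and>
     (\<forall>e\<in>arcs G - Astar G \<gamma>. \<forall>P\<in>st_paths G s t. z (e, P) = 0) \<and>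
     (\<Sum>e\<in>Astar G \<gamma>. c e * (\<Sum>P\<in>{P \<in> st_paths G s t. e \<in> set P}. z (e, P))) \<le> BI"

definition flow_val ::
  "('a,'b) pre_digraph \<Rightarrow> 'a \<Rightarrow> 'a \<Rightarrow> ('b list \<Rightarrow> real) \<Rightarrow> ('b \<times> 'b list \<Rightarrow> real) \<Rightarrow> real" where
  "flow_val G s t x z = (\<Sum>P\<in>st_paths G s t. max 0 (x P - (\<Sum>e\<in>set P. z (e, P))))"

definition robust_val ::
  "('a,'b) pre_digraph \<Rightarrow> 'a \<Rightarrow> 'a \<Rightarrow> ('b \<Rightarrow> real) \<Rightarrow> real
    \<Rightarrow> ('b list \<Rightarrow> real) \<Rightarrow> ('b \<Rightarrow> real) \<Rightarrow> real" where
  "robust_val G s t \<gamma> BI x c =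
     (INF z\<in>{z. interdiction_feasible G s t \<gamma> BI c z}. flow_val G s t x z)"

definition design_optimal ::
  "('a,'b) pre_digraph \<Rightarrow> 'a \<Rightarrow> 'a \<Rightarrow> ('b \<Rightarrow> real) \<Rightarrow> ('b \<Rightarrow> real) \<Rightarrow> real \<Rightarrow> real
    \<Rightarrow> ('b list \<Rightarrow> real) \<Rightarrow> ('b \<Rightarrow> real) \<Rightarrow> bool" where
  "design_optimal G s t u \<gamma> BF BI x c \<longleftrightarrow>
     design_feasible G s t u \<gamma> BF x c \<and>
     (\<forall>x' c'. design_feasible G s t u \<gamma> BF x' c' \<longrightarrow>
        robust_val G s t \<gamma> BI x' c' \<le> robust_val G s t \<gamma> BI x c)"

definition Gamma :: "('a,'b) pre_digraph \<Rightarrow> 'a \<Rightarrow> 'a \<Rightarrow> ('b \<Rightarrow> real) \<Rightarrow> ('b list \<Rightarrow> real) \<Rightarrow> real" where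
  "Gamma G s t \<gamma> x = (\<Sum>P\<in>st_paths G s t. \<Sum>e\<in>set P. \<gamma> e * x P)"

end

theory Submission
  imports Defs "HOL-Analysis.Function_Topology"
begin

text \<open>For a fixed flow x, the uniform cost BF / \<Gamma>(x) on every arc of A* carrying flow exhausts
the budget BF and charges the interdictor BF / \<Gamma>(x) per stolen unit, so x keeps at least its
uniform value max (flow on paths avoiding A*) (|x| - BI \<Gamma>(x) / BF).
Conversely, for an arbitrary design (x, c) let m_P be the cheapest cost on P. The interdictor
steals on the cheapest arcs, greedily by m_P up to a threshold \<tau> (a fractional knapsack);
shrinking x_P by the factor m_P / \<tau> on the paths stolen completely gives a feasible flow x'
with \<Gamma>(x') \<le> BF / \<tau> whose uniform value bounds the robust value of (x, c) from above.
The uniform value is continuous and the feasible flows form a compact set, so a flow of maximal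
uniform value, with uniform costs, is an optimal design.\<close>

lemma knapsack_threshold:
  fixes w a :: "'i \<Rightarrow> real"
  assumes fin: "finite I" and w_nonneg: "\<forall>i\<in>I. 0 \<le> w i" and "0 < B"
    and B_le: "B \<le> (\<Sum>i\<in>I. w i * a i)"
  obtains \<tau> where "0 < \<tau>" and "(\<Sum>i\<in>{i\<in>I. w i < \<tau>}. w i * a i) \<le> B"
    and "B \<le> (\<Sum>i\<in>{i\<in>I. w i \<le> \<tau>}. w i * a i)"
proof -
  define cost_upto where "cost_upto \<theta> = (\<Sum>i\<in>{i\<in>I. w i \<le> \<theta>}. w i * a i)" for \<theta>
  define \<Theta> where "\<Theta> = {\<theta> \<in> w ` I. B \<le> cost_upto \<theta>}"
  have "I \<noteq> {}" using B_le \<open>0 < B\<close> by auto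
  moreover have "{i\<in>I. w i \<le> Max (w ` I)} = I" using fin by auto
  ultimately have "Max (w ` I) \<in> \<Theta>" using fin B_le by (simp add: \<Theta>_def cost_upto_def)
  moreover have fin_\<Theta>: "finite \<Theta>" using fin by (simp add: \<Theta>_def)
  ultimately have "Min \<Theta> \<in> \<Theta>" by (intro Min_in) auto
  define \<tau> where "\<tau> = Min \<Theta>"
  have \<tau>_w: "\<tau> \<in> w ` I" and B_le_\<tau>: "B \<le> cost_upto \<tau>"
    using \<open>Min \<Theta> \<in> \<Theta>\<close> by (auto simp: \<tau>_def \<Theta>_def)
  have "cost_upto 0 = 0"
    unfolding cost_upto_def using w_nonneg by (intro sum.neutral) force
  then have "\<tau> \<noteq> 0" using B_le_\<tau> \<open>0 < B\<close> by auto
  moreover have "0 \<le> \<tau>" using \<tau>_w w_nonneg by auto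
  ultimately have "0 < \<tau>" by simp
  moreover have "(\<Sum>i\<in>{i\<in>I. w i < \<tau>}. w i * a i) \<le> B"
  proof (rule ccontr)
    define V where "V = {i\<in>I. w i < \<tau>}"
    assume "\<not> (\<Sum>i\<in>{i\<in>I. w i < \<tau>}. w i * a i) \<le> B"
    then have B_less: "B < (\<Sum>i\<in>V. w i * a i)" by (simp add: V_def)
    then have "V \<noteq> {}" using \<open>0 < B\<close> by auto
    moreover have fin_V: "finite V" using fin by (simp add: V_def)
    ultimately have "Max (w ` V) \<in> w ` V" by simp
    then have less: "Max (w ` V) < \<tau>" and "Max (w ` V) \<in> w ` I" by (auto simp: V_def)
    moreover have "{i\<in>I. w i \<le> Max (w ` V)} = V"
      using less fin_V by (auto simp: V_def)
    ultimately have "Max (w ` V) \<in> \<Theta>" using B_less by (simp add: \<Theta>_def cost_upto_def)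
    then have "\<tau> \<le> Max (w ` V)" using fin_\<Theta> by (simp add: \<tau>_def)
    then show False using less by simp
  qed
  ultimately show ?thesis using that B_le_\<tau> by (simp add: cost_upto_def)
qed

lemma fractional_knapsack:
  fixes w a :: "'i \<Rightarrow> real"
  assumes fin: "finite I" and w_nonneg: "\<forall>i\<in>I. 0 \<le> w i" and a_nonneg: "\<forall>i\<in>I. 0 \<le> a i"
    and "0 < B" and B_le: "B \<le> (\<Sum>i\<in>I. w i * a i)"
  obtains \<tau> y where "0 < \<tau>" and "\<forall>i\<in>I. 0 \<le> y i \<and> y i \<le> a i" and "(\<Sum>i\<in>I. w i * y i) = B"
    and "\<forall>i\<in>I. 0 < y i \<longrightarrow> w i \<le> \<tau>" and "\<forall>i\<in>I. y i < a i \<longrightarrow> \<tau> \<le> w i"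
proof -
  obtain \<tau> where "0 < \<tau>" and below: "(\<Sum>i\<in>{i\<in>I. w i < \<tau>}. w i * a i) \<le> B"
    and above: "B \<le> (\<Sum>i\<in>{i\<in>I. w i \<le> \<tau>}. w i * a i)"
    using knapsack_threshold[OF fin w_nonneg \<open>0 < B\<close> B_le] by blast
  define C where "C = (\<Sum>i\<in>{i\<in>I. w i < \<tau>}. w i * a i)"
  define b where "b = (\<Sum>i\<in>{i\<in>I. w i = \<tau>}. a i)"
  have "{i\<in>I. w i \<le> \<tau>} = {i\<in>I. w i < \<tau>} \<union> {i\<in>I. w i = \<tau>}" by auto
  then have "(\<Sum>i\<in>{i\<in>I. w i \<le> \<tau>}. w i * a i) = C + (\<Sum>i\<in>{i\<in>I. w i = \<tau>}. w i * a i)"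
    using fin by (simp add: C_def sum.union_disjoint disjoint_iff)
  also have "(\<Sum>i\<in>{i\<in>I. w i = \<tau>}. w i * a i) = \<tau> * b"
    by (simp add: b_def sum_distrib_left)
  finally have gap: "0 \<le> B - C" "B - C \<le> \<tau> * b" using below above by (simp_all add: C_def)
  have "0 \<le> \<tau> * b"
    unfolding b_def using \<open>0 < \<tau>\<close> a_nonneg by (intro mult_nonneg_nonneg sum_nonneg) auto
  define \<beta> where "\<beta> = (B - C) / (\<tau> * b)"
  have "\<beta> \<le> 1"
  proof (cases "\<tau> * b = 0")
    case False
    then have "0 < \<tau> * b" using \<open>0 \<le> \<tau> * b\<close> by linarith
    then show ?thesis using gap by (simp add: \<beta>_def)
  next
    case True
    show ?thesis unfolding \<beta>_def True by simp
  qed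
  moreover have "0 \<le> \<beta>" unfolding \<beta>_def using gap \<open>0 \<le> \<tau> * b\<close> by simp
  ultimately have \<beta>: "0 \<le> \<beta>" "\<beta> \<le> 1" by simp_all
  have spent: "C + \<tau> * \<beta> * b = B"
    using gap by (cases "\<tau> * b = 0") (simp_all add: \<beta>_def)
  \<comment> \<open>items below \<tau> are taken whole, the fraction \<beta> of those at price \<tau> fills the budget\<close>
  define y where "y i = (if w i < \<tau> then a i else if w i = \<tau> then \<beta> * a i else 0)" for i
  show ?thesis
  proof (rule that[OF \<open>0 < \<tau>\<close>])
    show "\<forall>i\<in>I. 0 \<le> y i \<and> y i \<le> a i"
      using \<beta> a_nonneg by (auto simp: y_def mult_left_le_one_le)
    have "(\<Sum>i\<in>I. w i * y i)
        = (\<Sum>i\<in>I. (if w i < \<tau> then w i * a i else 0) + \<tau> * \<beta> * (if w i = \<tau> then a i else 0))"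
      by (intro sum.cong refl) (auto simp: y_def)
    also have "\<dots> = C + \<tau> * \<beta> * b"
      using fin by (simp add: C_def b_def sum.distrib sum_distrib_left sum.inter_filter)
    finally show "(\<Sum>i\<in>I. w i * y i) = B" using spent by simp
    show "\<forall>i\<in>I. 0 < y i \<longrightarrow> w i \<le> \<tau>" and "\<forall>i\<in>I. y i < a i \<longrightarrow> \<tau> \<le> w i"
      by (auto simp: y_def)
  qed
qed

text \<open>A path of price w carrying a, of which y is stolen at threshold \<tau>, keeps a - y + w y / \<tau>
in the rescaled flow.\<close>
lemma threshold_rescale:
  fixes a y w \<tau> :: real
  assumes "0 < \<tau>" "0 \<le> w" "0 \<le> y" "y \<le> a"
    and "0 < y \<longrightarrow> w \<le> \<tau>" and "y < a \<longrightarrow> \<tau> \<le> w"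
  shows "0 \<le> a - y + w * y / \<tau>" and "a - y + w * y / \<tau> \<le> a"
    and "a - y + w * y / \<tau> \<le> w * a / \<tau>"
proof -
  show "0 \<le> a - y + w * y / \<tau>" using assms by simp
  have "0 \<le> (\<tau> - w) * y" using assms by (cases "y = 0") auto
  moreover have "a - y + w * y / \<tau> = a - (\<tau> - w) * y / \<tau>"
    using \<open>0 < \<tau>\<close> by (simp add: field_simps)
  ultimately show "a - y + w * y / \<tau> \<le> a" using \<open>0 < \<tau>\<close> by simp
  have "0 \<le> (w - \<tau>) * (a - y)" using assms by (cases "y = a") auto
  moreover have "a - y + w * y / \<tau> = w * a / \<tau> - (w - \<tau>) * (a - y) / \<tau>"
    using \<open>0 < \<tau>\<close> by (simp add: field_simps)
  ultimately show "a - y + w * y / \<tau> \<le> w * a / \<tau>" using \<open>0 < \<tau>\<close> by simp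
qed

lemma continuous_map_sum_coordinates:
  assumes "finite A" and "A \<subseteq> I"
  shows "continuous_map (product_topology (\<lambda>_. euclideanreal) I) euclideanreal
           (\<lambda>x. \<Sum>i\<in>A. a i * x i)"
proof (rule continuous_map_sum[OF \<open>finite A\<close>])
  fix i assume "i \<in> A"
  then have "continuous_map (product_topology (\<lambda>_. euclideanreal) I) euclideanreal (\<lambda>x. x i)"
    using \<open>A \<subseteq> I\<close> continuous_map_product_projection[of i I "\<lambda>_. euclideanreal"] by auto
  then show "continuous_map (product_topology (\<lambda>_. euclideanreal) I) euclideanreal (\<lambda>x. a i * x i)"
    by (rule continuous_map_real_mult_left)
qed

locale robust_flow_design =
  fixes G :: "('a,'b) pre_digraph" and s t :: 'a and u \<gamma> :: "'b \<Rightarrow> real" and BF BI :: real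
  assumes fin_digraph: "fin_digraph G" and s_ne_t: "s \<noteq> t"
    and u_nonneg: "\<forall>e\<in>arcs G. 0 \<le> u e" and \<gamma>_nonneg: "\<forall>e\<in>arcs G. 0 \<le> \<gamma> e"
    and BF_pos: "0 < BF" and BI_nonneg: "0 \<le> BI"
begin

abbreviation paths :: "'b list set" where "paths \<equiv> st_paths G s t"
abbreviation Ast :: "'b set" where "Ast \<equiv> Astar G \<gamma>"
abbreviation \<Gamma> :: "('b list \<Rightarrow> real) \<Rightarrow> real" where "\<Gamma> \<equiv> Gamma G s t \<gamma>"
abbreviation load :: "('b list \<Rightarrow> real) \<Rightarrow> 'b \<Rightarrow> real" where "load \<equiv> arc_load G s t"

lemma finite_paths: "finite paths"
  using fin_digraph.apaths_finite[OF fin_digraph] by (simp add: st_paths_def)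

lemma path_arcs: "P \<in> paths \<Longrightarrow> set P \<subseteq> arcs G"
  by (simp add: st_paths_def pre_digraph.apath_def pre_digraph.awalk_def)

lemma path_nonempty: "P \<in> paths \<Longrightarrow> P \<noteq> []"
  using s_ne_t by (auto simp: st_paths_def pre_digraph.apath_def pre_digraph.awalk_def pre_digraph.cas.simps)

lemma finite_arcs: "finite (arcs G)"
  using fin_digraph.finite_arcs[OF fin_digraph] .

lemma Ast_subset: "Ast \<subseteq> arcs G"
  by (auto simp: Astar_def)

lemma finite_Ast: "finite Ast"
  using Ast_subset finite_arcs by (rule finite_subset)

lemma sum_Ast_paths_swap:
  "(\<Sum>e\<in>Ast. \<Sum>P\<in>{P\<in>paths. e \<in> set P}. f e P) = (\<Sum>P\<in>paths. \<Sum>e\<in>set P \<inter> Ast. f e P)"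
proof -
  have "set P \<inter> Ast = {e\<in>Ast. e \<in> set P}" for P :: "'b list" by auto
  then show ?thesis
    using sum.swap_restrict[OF finite_Ast finite_paths, of f "\<lambda>e P. e \<in> set P"] by simp
qed

definition stealable_paths :: "'b list set" where
  "stealable_paths = {P \<in> paths. set P \<inter> Ast \<noteq> {}}"

definition safe_flow :: "('b list \<Rightarrow> real) \<Rightarrow> real" where
  "safe_flow x = (\<Sum>P\<in>paths - stealable_paths. x P)"

definition total_flow :: "('b list \<Rightarrow> real) \<Rightarrow> real" where
  "total_flow x = (\<Sum>P\<in>paths. x P)"

definition path_gamma :: "'b list \<Rightarrow> real" where
  "path_gamma P = (\<Sum>e\<in>set P. \<gamma> e)"

definition uniform_value :: "('b list \<Rightarrow> real) \<Rightarrow> real" where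
  "uniform_value x = max (safe_flow x) (total_flow x - BI / BF * \<Gamma> x)"

definition uniform_cost :: "('b list \<Rightarrow> real) \<Rightarrow> 'b \<Rightarrow> real" where
  "uniform_cost x e = (if \<exists>P\<in>paths. e \<in> set P \<and> 0 < x P then BF / \<Gamma> x else 0)"

lemma stealable_paths_subset: "stealable_paths \<subseteq> paths"
  by (auto simp: stealable_paths_def)

lemma sum_paths_restrict_stealable:
  "(\<Sum>P\<in>paths. \<Sum>e\<in>set P \<inter> Ast. f e P) = (\<Sum>P\<in>stealable_paths. \<Sum>e\<in>set P \<inter> Ast. f e P)"
  using finite_paths stealable_paths_subset
  by (intro sum.mono_neutral_right) (auto simp: stealable_paths_def)

lemma total_flow_split: "total_flow x = safe_flow x + (\<Sum>P\<in>stealable_paths. x P)"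
  unfolding total_flow_def safe_flow_def
  using sum.subset_diff[OF stealable_paths_subset finite_paths] .

lemma path_gamma_eq: "P \<in> paths \<Longrightarrow> path_gamma P = (\<Sum>e\<in>set P \<inter> Ast. \<gamma> e)"
  unfolding path_gamma_def using path_arcs \<gamma>_nonneg
  by (intro sum.mono_neutral_right) (force simp: Astar_def)+

lemma path_gamma_nonneg: "P \<in> paths \<Longrightarrow> 0 \<le> path_gamma P"
  unfolding path_gamma_def using path_arcs \<gamma>_nonneg by (intro sum_nonneg) auto

lemma path_gamma_pos: "P \<in> stealable_paths \<Longrightarrow> 0 < path_gamma P"
proof -
  assume P: "P \<in> stealable_paths"
  then obtain e where e: "e \<in> set P \<inter> Ast" by (auto simp: stealable_paths_def)
  have "\<gamma> e \<le> (\<Sum>e\<in>set P \<inter> Ast. \<gamma> e)"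
    using e Ast_subset \<gamma>_nonneg by (intro member_le_sum) auto
  moreover have "0 < \<gamma> e" using e by (simp add: Astar_def)
  ultimately show ?thesis using P stealable_paths_subset path_gamma_eq by auto
qed

lemma Gamma_eq_path_gamma: "\<Gamma> x = (\<Sum>P\<in>paths. path_gamma P * x P)"
  by (simp add: Gamma_def path_gamma_def sum_distrib_right)

lemma Gamma_eq_stealable: "\<Gamma> x = (\<Sum>P\<in>stealable_paths. path_gamma P * x P)"
  unfolding Gamma_eq_path_gamma using finite_paths stealable_paths_subset
  by (intro sum.mono_neutral_right) (auto simp: path_gamma_eq stealable_paths_def)

lemma Gamma_eq_arc_load: "\<Gamma> x = (\<Sum>e\<in>Ast. \<gamma> e * load x e)"
proof -
  have "(\<Sum>e\<in>Ast. \<gamma> e * load x e) = (\<Sum>P\<in>paths. \<Sum>e\<in>set P \<inter> Ast. \<gamma> e * x P)"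
    by (simp add: arc_load_def sum_distrib_left sum_Ast_paths_swap)
  also have "\<dots> = \<Gamma> x"
    unfolding Gamma_eq_path_gamma by (intro sum.cong refl) (simp add: path_gamma_eq sum_distrib_right)
  finally show ?thesis by simp
qed

lemma Gamma_nonneg: "\<forall>P\<in>paths. 0 \<le> x P \<Longrightarrow> 0 \<le> \<Gamma> x"
  unfolding Gamma_eq_stealable using stealable_paths_subset path_gamma_nonneg
  by (intro sum_nonneg) auto

lemma stealable_flow_zero:
  assumes x_nonneg: "\<forall>P\<in>paths. 0 \<le> x P" and "\<Gamma> x = 0" and P: "P \<in> stealable_paths"
  shows "x P = 0"
proof -
  have terms_nonneg: "\<forall>Q\<in>stealable_paths. 0 \<le> path_gamma Q * x Q"
    using x_nonneg stealable_paths_subset path_gamma_nonneg by auto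
  have "finite stealable_paths" using stealable_paths_subset finite_paths by (rule finite_subset)
  then have "path_gamma P * x P = 0"
    using \<open>\<Gamma> x = 0\<close> P sum_nonneg_eq_0_iff[of stealable_paths, OF _ terms_nonneg[rule_format]]
    by (simp add: Gamma_eq_stealable)
  then show ?thesis using path_gamma_pos[OF P] by simp
qed

lemma design_feasible_uniform_cost:
  assumes "flow_feasible G s t u x"
  shows "design_feasible G s t u \<gamma> BF x (uniform_cost x)"
proof -
  have x_nonneg: "\<forall>P\<in>paths. 0 \<le> x P" using assms by (simp add: flow_feasible_def)
  have load_unused: "load x e = 0" if "\<not> (\<exists>P\<in>paths. e \<in> set P \<and> 0 < x P)" for e
    unfolding arc_load_def using that x_nonneg by (intro sum.neutral) force
  have "(\<Sum>e\<in>Ast. \<gamma> e * uniform_cost x e * load x e) = BF / \<Gamma> x * (\<Sum>e\<in>Ast. \<gamma> e * load x e)"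
    unfolding sum_distrib_left by (intro sum.cong refl) (auto simp: uniform_cost_def load_unused)
  also have "\<dots> \<le> BF"
    using BF_pos by (cases "\<Gamma> x = 0") (simp_all add: Gamma_eq_arc_load[symmetric])
  finally show ?thesis
    using assms Gamma_nonneg[OF x_nonneg] BF_pos
    by (simp add: design_feasible_def uniform_cost_def)
qed

lemma stolen_on_Ast:
  assumes "interdiction_feasible G s t \<gamma> BI c z" and "P \<in> paths"
  shows "(\<Sum>e\<in>set P. z (e, P)) = (\<Sum>e\<in>set P \<inter> Ast. z (e, P))"
  using assms path_arcs[OF assms(2)]
  by (intro sum.mono_neutral_right) (auto simp: interdiction_feasible_def)

lemma interdiction_cost_eq:
  fixes c :: "'b \<Rightarrow> real"
  shows "(\<Sum>e\<in>Ast. c e * (\<Sum>P\<in>{P\<in>paths. e \<in> set P}. z (e, P)))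
     = (\<Sum>P\<in>paths. \<Sum>e\<in>set P \<inter> Ast. c e * z (e, P))"
  unfolding sum_distrib_left by (rule sum_Ast_paths_swap)

lemma robust_val_le_flow_val:
  assumes "interdiction_feasible G s t \<gamma> BI c z"
  shows "robust_val G s t \<gamma> BI x c \<le> flow_val G s t x z"
  unfolding robust_val_def using assms
  by (intro cInf_lower bdd_belowI[of _ 0]) (auto simp: flow_val_def intro: sum_nonneg)

subsection \<open>Uniform costs guarantee the uniform value\<close>

lemma safe_flow_le_flow_val:
  assumes x_nonneg: "\<forall>P\<in>paths. 0 \<le> x P" and z: "interdiction_feasible G s t \<gamma> BI c z"
  shows "safe_flow x \<le> flow_val G s t x z"
proof -
  have "safe_flow x = (\<Sum>P\<in>paths - stealable_paths. max 0 (x P - (\<Sum>e\<in>set P. z (e, P))))"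
    unfolding safe_flow_def using x_nonneg
    by (intro sum.cong refl) (auto simp: stolen_on_Ast[OF z] stealable_paths_def)
  also have "\<dots> \<le> flow_val G s t x z"
    unfolding flow_val_def using finite_paths by (intro sum_mono2) auto
  finally show ?thesis .
qed

text \<open>On such paths every arc of A* costs BF / \<Gamma>(x).\<close>
lemma stolen_on_support_le:
  assumes "0 < \<Gamma> x" and z: "interdiction_feasible G s t \<gamma> BI (uniform_cost x) z"
  shows "(\<Sum>P\<in>{P\<in>paths. 0 < x P}. \<Sum>e\<in>set P. z (e, P)) \<le> BI / BF * \<Gamma> x"
proof -
  have z_nonneg: "\<forall>e\<in>arcs G. \<forall>P\<in>paths. 0 \<le> z (e, P)" using z by (simp add: interdiction_feasible_def)
  have cost_nonneg: "0 \<le> (\<Sum>e\<in>set P \<inter> Ast. uniform_cost x e * z (e, P))" if "P \<in> paths" for P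
    using that z_nonneg Ast_subset \<open>0 < \<Gamma> x\<close> BF_pos
    by (intro sum_nonneg mult_nonneg_nonneg) (auto simp: uniform_cost_def)
  have "BF / \<Gamma> x * (\<Sum>P\<in>{P\<in>paths. 0 < x P}. \<Sum>e\<in>set P. z (e, P))
      = (\<Sum>P\<in>{P\<in>paths. 0 < x P}. \<Sum>e\<in>set P \<inter> Ast. uniform_cost x e * z (e, P))"
  proof (subst sum_distrib_left, intro sum.cong refl)
    fix P assume P: "P \<in> {P\<in>paths. 0 < x P}"
    then have "uniform_cost x e = BF / \<Gamma> x" if "e \<in> set P" for e
      using that by (auto simp: uniform_cost_def)
    then show "BF / \<Gamma> x * (\<Sum>e\<in>set P. z (e, P))
        = (\<Sum>e\<in>set P \<inter> Ast. uniform_cost x e * z (e, P))"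
      using P by (simp add: stolen_on_Ast[OF z] sum_distrib_left)
  qed
  also have "\<dots> \<le> (\<Sum>P\<in>paths. \<Sum>e\<in>set P \<inter> Ast. uniform_cost x e * z (e, P))"
    using finite_paths cost_nonneg by (intro sum_mono2) auto
  also have "\<dots> \<le> BI"
    using z by (simp add: interdiction_feasible_def interdiction_cost_eq)
  finally show ?thesis using \<open>0 < \<Gamma> x\<close> BF_pos by (simp add: field_simps)
qed

lemma total_flow_minus_le_flow_val:
  assumes x_nonneg: "\<forall>P\<in>paths. 0 \<le> x P"
    and z: "interdiction_feasible G s t \<gamma> BI (uniform_cost x) z"
  shows "total_flow x - BI / BF * \<Gamma> x \<le> flow_val G s t x z"
proof (cases "\<Gamma> x = 0")
  case True
  then have "total_flow x = safe_flow x"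
    using stealable_flow_zero[OF x_nonneg] by (simp add: total_flow_split)
  then show ?thesis using True safe_flow_le_flow_val[OF x_nonneg z] by simp
next
  case False
  define W where "W = {P\<in>paths. 0 < x P}"
  have "W \<subseteq> paths" by (auto simp: W_def)
  have "total_flow x = (\<Sum>P\<in>W. x P)"
    unfolding total_flow_def W_def using finite_paths x_nonneg
    by (intro sum.mono_neutral_right) force+
  then have "total_flow x - (\<Sum>P\<in>W. \<Sum>e\<in>set P. z (e, P))
      = (\<Sum>P\<in>W. x P - (\<Sum>e\<in>set P. z (e, P)))"
    by (simp add: sum_subtractf)
  also have "\<dots> \<le> (\<Sum>P\<in>W. max 0 (x P - (\<Sum>e\<in>set P. z (e, P))))"
    by (intro sum_mono) simp
  also have "\<dots> \<le> flow_val G s t x z"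
    unfolding flow_val_def using finite_paths \<open>W \<subseteq> paths\<close> by (intro sum_mono2) auto
  finally show ?thesis
    using stolen_on_support_le[OF _ z] False Gamma_nonneg[OF x_nonneg]
    by (simp add: W_def)
qed

lemma uniform_value_le_robust_val:
  assumes "flow_feasible G s t u x"
  shows "uniform_value x \<le> robust_val G s t \<gamma> BI x (uniform_cost x)"
  unfolding robust_val_def
proof (rule cInf_greatest)
  show "flow_val G s t x ` {z. interdiction_feasible G s t \<gamma> BI (uniform_cost x) z} \<noteq> {}"
    using BI_nonneg by (auto simp: interdiction_feasible_def intro!: exI[of _ "\<lambda>_. 0"])
  have x_nonneg: "\<forall>P\<in>paths. 0 \<le> x P" using assms by (simp add: flow_feasible_def)
  show "uniform_value x \<le> v"
    if "v \<in> flow_val G s t x ` {z. interdiction_feasible G s t \<gamma> BI (uniform_cost x) z}" for v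
    using that safe_flow_le_flow_val[OF x_nonneg] total_flow_minus_le_flow_val[OF x_nonneg]
    by (auto simp: uniform_value_def)
qed

subsection \<open>The greedy interdictor\<close>

definition cheapest_arc :: "('b \<Rightarrow> real) \<Rightarrow> 'b list \<Rightarrow> 'b" where
  "cheapest_arc c P = arg_min_on c (set P \<inter> Ast)"

lemma cheapest_arc_in: "P \<in> stealable_paths \<Longrightarrow> cheapest_arc c P \<in> set P \<inter> Ast"
  unfolding cheapest_arc_def using finite_Ast
  by (intro arg_min_if_finite(1)) (auto simp: stealable_paths_def)

lemma cheapest_arc_le: "P \<in> stealable_paths \<Longrightarrow> e \<in> set P \<inter> Ast \<Longrightarrow> c (cheapest_arc c P) \<le> c e"
  unfolding cheapest_arc_def using finite_Ast by (intro arg_min_least) auto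

lemma cheapest_budget:
  assumes "design_feasible G s t u \<gamma> BF x c"
  shows "(\<Sum>P\<in>stealable_paths. path_gamma P * (c (cheapest_arc c P) * x P)) \<le> BF"
proof -
  have x_nonneg: "\<forall>P\<in>paths. 0 \<le> x P" using assms by (simp add: design_feasible_def flow_feasible_def)
  have "(\<Sum>P\<in>stealable_paths. path_gamma P * (c (cheapest_arc c P) * x P))
      = (\<Sum>P\<in>stealable_paths. \<Sum>e\<in>set P \<inter> Ast. \<gamma> e * c (cheapest_arc c P) * x P)"
    using subsetD[OF stealable_paths_subset]
    by (intro sum.cong refl) (simp add: path_gamma_eq sum_distrib_right mult.assoc)
  also have "\<dots> \<le> (\<Sum>P\<in>stealable_paths. \<Sum>e\<in>set P \<inter> Ast. \<gamma> e * c e * x P)"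
    using x_nonneg stealable_paths_subset Ast_subset \<gamma>_nonneg cheapest_arc_le
    by (intro sum_mono mult_right_mono mult_left_mono) auto
  also have "\<dots> = (\<Sum>e\<in>Ast. \<gamma> e * c e * load x e)"
    by (simp add: arc_load_def sum_distrib_left sum_Ast_paths_swap sum_paths_restrict_stealable)
  also have "\<dots> \<le> BF" using assms by (simp add: design_feasible_def)
  finally show ?thesis .
qed

text \<open>The interdictor steals y P from each stealable path P, all of it on the cheapest arc.\<close>
lemma robust_val_le_steal_cheapest:
  assumes x_nonneg: "\<forall>P\<in>paths. 0 \<le> x P"
    and y: "\<forall>P\<in>stealable_paths. 0 \<le> y P \<and> y P \<le> x P"
    and budget: "(\<Sum>P\<in>stealable_paths. c (cheapest_arc c P) * y P) \<le> BI"
  shows "robust_val G s t \<gamma> BI x c \<le> total_flow x - (\<Sum>P\<in>stealable_paths. y P)"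
proof -
  define z where "z = (\<lambda>(e, P). if P \<in> stealable_paths \<and> e = cheapest_arc c P then y P else 0)"
  have stolen: "(\<Sum>e\<in>A. f e * z (e, P)) = (if P \<in> stealable_paths \<and> cheapest_arc c P \<in> A
      then f (cheapest_arc c P) * y P else 0)" if "finite A" for A f P
  proof -
    have "(\<Sum>e\<in>A. f e * z (e, P)) = (\<Sum>e\<in>A. if e = cheapest_arc c P
        then (if P \<in> stealable_paths then f e * y P else 0) else 0)"
      by (intro sum.cong refl) (auto simp: z_def)
    then show ?thesis using that by auto
  qed
  have "(\<Sum>e\<in>Ast. c e * (\<Sum>P\<in>{P\<in>paths. e \<in> set P}. z (e, P)))
      = (\<Sum>P\<in>stealable_paths. c (cheapest_arc c P) * y P)"
    unfolding interdiction_cost_eq sum_paths_restrict_stealable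
    using cheapest_arc_in by (intro sum.cong refl) (simp add: stolen)
  then have "interdiction_feasible G s t \<gamma> BI c z"
    using budget y cheapest_arc_in by (auto simp: interdiction_feasible_def z_def)
  then have "robust_val G s t \<gamma> BI x c \<le> flow_val G s t x z"
    by (rule robust_val_le_flow_val)
  also have "flow_val G s t x z = (\<Sum>P\<in>paths. x P - (if P \<in> stealable_paths then y P else 0))"
    unfolding flow_val_def using stolen[of "set _" "\<lambda>_. 1"] x_nonneg y cheapest_arc_in
    by (intro sum.cong refl) auto
  also have "\<dots> = total_flow x - (\<Sum>P\<in>stealable_paths. y P)"
    using sum.inter_restrict[OF finite_paths, of y stealable_paths] stealable_paths_subset
    by (simp add: total_flow_def sum_subtractf Int_absorb1)
  finally show ?thesis .
qed

lemma flow_feasible_le: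
  assumes "flow_feasible G s t u x" and "\<forall>P\<in>paths. 0 \<le> x' P \<and> x' P \<le> x P"
  shows "flow_feasible G s t u x'"
  unfolding flow_feasible_def
proof (intro conjI ballI)
  show "0 \<le> x' P" if "P \<in> paths" for P using assms(2) that by simp
  show "load x' e \<le> u e" if "e \<in> arcs G" for e
  proof -
    have "load x' e \<le> load x e" unfolding arc_load_def using assms(2) by (intro sum_mono) auto
    also have "\<dots> \<le> u e" using assms(1) that by (simp add: flow_feasible_def)
    finally show ?thesis .
  qed
qed

lemma robust_val_le_uniform_value_rescaled:
  assumes xc: "design_feasible G s t u \<gamma> BF x c" and "0 < \<tau>"
    and y: "\<forall>P\<in>stealable_paths. 0 \<le> y P \<and> y P \<le> x P"
    and spent: "(\<Sum>P\<in>stealable_paths. c (cheapest_arc c P) * y P) = BI"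
    and below: "\<forall>P\<in>stealable_paths. 0 < y P \<longrightarrow> c (cheapest_arc c P) \<le> \<tau>"
    and above: "\<forall>P\<in>stealable_paths. y P < x P \<longrightarrow> \<tau> \<le> c (cheapest_arc c P)"
  obtains x' where "flow_feasible G s t u x'" and "robust_val G s t \<gamma> BI x c \<le> uniform_value x'"
proof -
  have ff: "flow_feasible G s t u x" using xc by (simp add: design_feasible_def)
  then have x_nonneg: "\<forall>P\<in>paths. 0 \<le> x P" by (simp add: flow_feasible_def)
  define m where "m P = c (cheapest_arc c P)" for P
  have m_nonneg: "\<forall>P\<in>stealable_paths. 0 \<le> m P"
    using xc cheapest_arc_in by (auto simp: m_def design_feasible_def)
  define x' where
    "x' P = (if P \<in> stealable_paths then x P - y P + m P * y P / \<tau> else x P)" for P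
  have x'_U: "0 \<le> x' P" "x' P \<le> x P" "x' P \<le> m P * x P / \<tau>" if "P \<in> stealable_paths" for P
    using threshold_rescale[OF \<open>0 < \<tau>\<close>, of "m P" "y P" "x P"] that m_nonneg y below above
    by (simp_all add: x'_def m_def)
  have "flow_feasible G s t u x'"
    using x'_U x_nonneg by (intro flow_feasible_le[OF ff] ballI) (auto simp: x'_def)
  have "robust_val G s t \<gamma> BI x c \<le> total_flow x - (\<Sum>P\<in>stealable_paths. y P)"
    using spent by (intro robust_val_le_steal_cheapest[OF x_nonneg y]) simp
  also have "\<dots> = total_flow x' - BI / \<tau>"
  proof -
    have "(\<Sum>P\<in>stealable_paths. x' P)
        = (\<Sum>P\<in>stealable_paths. x P) - (\<Sum>P\<in>stealable_paths. y P) + BI / \<tau>"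
      unfolding spent[symmetric] sum_divide_distrib
      by (simp add: x'_def m_def sum.distrib sum_subtractf)
    moreover have "safe_flow x' = safe_flow x" by (simp add: safe_flow_def x'_def)
    ultimately show ?thesis by (simp add: total_flow_split)
  qed
  also have "\<dots> \<le> total_flow x' - BI / BF * \<Gamma> x'"
  proof -
    have "path_gamma P * x' P \<le> path_gamma P * (m P * x P) / \<tau>" if "P \<in> stealable_paths" for P
      using mult_left_mono[OF x'_U(3)[OF that] path_gamma_nonneg[OF subsetD[OF stealable_paths_subset that]]]
      by simp
    then have "\<Gamma> x' \<le> (\<Sum>P\<in>stealable_paths. path_gamma P * (m P * x P)) / \<tau>"
      unfolding Gamma_eq_stealable sum_divide_distrib by (intro sum_mono)
    also have "\<dots> \<le> BF / \<tau>"
      using cheapest_budget[OF xc] \<open>0 < \<tau>\<close> by (simp add: m_def divide_right_mono)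
    finally have "BI / BF * \<Gamma> x' \<le> BI / BF * (BF / \<tau>)"
      using BI_nonneg BF_pos by (intro mult_left_mono) auto
    then show ?thesis using BF_pos by simp
  qed
  also have "\<dots> \<le> uniform_value x'" by (simp add: uniform_value_def)
  finally show ?thesis by (rule that[OF \<open>flow_feasible G s t u x'\<close>])
qed

lemma robust_val_le_uniform_value:
  assumes xc: "design_feasible G s t u \<gamma> BF x c"
  obtains x' where "flow_feasible G s t u x'" and "robust_val G s t \<gamma> BI x c \<le> uniform_value x'"
proof -
  have ff: "flow_feasible G s t u x" using xc by (simp add: design_feasible_def)
  then have x_nonneg: "\<forall>P\<in>paths. 0 \<le> x P" by (simp add: flow_feasible_def)
  have x_nonneg_U: "\<forall>P\<in>stealable_paths. 0 \<le> x P" using x_nonneg stealable_paths_subset by auto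
  let ?m = "\<lambda>P. c (cheapest_arc c P)"
  consider "BI = 0" | "(\<Sum>P\<in>stealable_paths. ?m P * x P) \<le> BI"
    | "0 < BI" "BI \<le> (\<Sum>P\<in>stealable_paths. ?m P * x P)"
    using BI_nonneg by fastforce
  then show ?thesis
  proof cases
    case 1
    then have "robust_val G s t \<gamma> BI x c \<le> total_flow x - (\<Sum>P\<in>stealable_paths. 0)"
      using x_nonneg_U by (intro robust_val_le_steal_cheapest[OF x_nonneg]) auto
    moreover have "total_flow x \<le> uniform_value x" using 1 unfolding uniform_value_def by simp
    ultimately show ?thesis using that[OF ff] by simp
  next
    case 2
    then have "robust_val G s t \<gamma> BI x c \<le> total_flow x - (\<Sum>P\<in>stealable_paths. x P)"
      using x_nonneg_U by (intro robust_val_le_steal_cheapest[OF x_nonneg]) auto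
    then show ?thesis using that[OF ff] by (simp add: uniform_value_def total_flow_split)
  next
    case 3
    have "\<forall>P\<in>stealable_paths. 0 \<le> ?m P"
      using xc cheapest_arc_in by (auto simp: design_feasible_def)
    then obtain \<tau> y where "0 < \<tau>" and "\<forall>P\<in>stealable_paths. 0 \<le> y P \<and> y P \<le> x P"
      and "(\<Sum>P\<in>stealable_paths. ?m P * y P) = BI"
      and "\<forall>P\<in>stealable_paths. 0 < y P \<longrightarrow> ?m P \<le> \<tau>"
      and "\<forall>P\<in>stealable_paths. y P < x P \<longrightarrow> \<tau> \<le> ?m P"
      by (rule fractional_knapsack[OF finite_subset[OF stealable_paths_subset finite_paths] _ x_nonneg_U 3])
    then show ?thesis using that by (rule robust_val_le_uniform_value_rescaled[OF xc])
  qed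
qed

subsection \<open>Compactness of the feasible flows\<close>

abbreviation flow_topology :: "('b list \<Rightarrow> real) topology" where
  "flow_topology \<equiv> product_topology (\<lambda>_. euclideanreal) paths"

lemma continuous_map_sum_paths:
  "A \<subseteq> paths \<Longrightarrow> continuous_map flow_topology euclideanreal (\<lambda>x. \<Sum>P\<in>A. a P * x P)"
  using continuous_map_sum_coordinates finite_subset[OF _ finite_paths] by blast

lemma continuous_map_uniform_value: "continuous_map flow_topology euclideanreal uniform_value"
proof -
  have "continuous_map flow_topology euclideanreal safe_flow"
    using continuous_map_sum_paths[of "paths - stealable_paths" "\<lambda>_. 1"]
    by (simp add: safe_flow_def[abs_def])
  moreover have "continuous_map flow_topology euclideanreal total_flow"
    using continuous_map_sum_paths[of paths "\<lambda>_. 1"] by (simp add: total_flow_def[abs_def])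
  moreover have "continuous_map flow_topology euclideanreal \<Gamma>"
    using continuous_map_sum_paths[OF stealable_paths_subset, of path_gamma]
    by (simp add: Gamma_eq_stealable[abs_def])
  ultimately show ?thesis unfolding uniform_value_def[abs_def]
    by (intro continuous_map_real_max continuous_map_diff continuous_map_real_mult_left)
qed

text \<open>The topspace of flow_topology consists of functions extensional on paths, so flows are
compared there through their restrictions.\<close>
lemma restrict_paths_invariant:
  "flow_feasible G s t u (restrict x paths) = flow_feasible G s t u x"
  "uniform_value (restrict x paths) = uniform_value x"
proof -
  have "load (restrict x paths) = load x"
    unfolding arc_load_def by (intro ext sum.cong refl) auto
  then show "flow_feasible G s t u (restrict x paths) = flow_feasible G s t u x"
    by (simp add: flow_feasible_def)
  have "\<forall>P\<in>stealable_paths. restrict x paths P = x P" using stealable_paths_subset by auto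
  then show "uniform_value (restrict x paths) = uniform_value x"
    by (simp add: uniform_value_def safe_flow_def total_flow_def Gamma_eq_stealable)
qed

lemma flow_bounded:
  assumes "flow_feasible G s t u x" and "P \<in> paths"
  shows "x P \<le> (\<Sum>e\<in>arcs G. u e)"
proof -
  obtain e where e: "e \<in> set P" using path_nonempty[OF \<open>P \<in> paths\<close>] by (cases P) auto
  then have "e \<in> arcs G" using path_arcs[OF \<open>P \<in> paths\<close>] by auto
  have "x P \<le> load x e"
    unfolding arc_load_def using assms e finite_paths
    by (intro member_le_sum) (auto simp: flow_feasible_def)
  also have "\<dots> \<le> u e" using assms \<open>e \<in> arcs G\<close> by (simp add: flow_feasible_def)
  also have "\<dots> \<le> (\<Sum>e\<in>arcs G. u e)"
    using \<open>e \<in> arcs G\<close> u_nonneg finite_arcs by (intro member_le_sum) auto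
  finally show ?thesis .
qed

lemma compactin_feasible_flows:
  "compactin flow_topology {x \<in> topspace flow_topology. flow_feasible G s t u x}"
proof -
  define box where "box = PiE paths (\<lambda>_. {0..\<Sum>e\<in>arcs G. u e})"
  define capacity where "capacity e = {x \<in> topspace flow_topology. load x e \<in> {..u e}}" for e
  define capacities where "capacities = \<Inter> (insert (topspace flow_topology) (capacity ` arcs G))"
  have "{x \<in> topspace flow_topology. flow_feasible G s t u x} = box \<inter> capacities"
    using flow_bounded
    by (auto simp: box_def capacity_def capacities_def flow_feasible_def PiE_iff extensional_def)
  moreover have "compactin flow_topology box"
    by (simp add: box_def compactin_PiE)
  moreover have "closedin flow_topology capacities"
  proof -
    have "closedin flow_topology (capacity e)" for e
      unfolding capacity_def arc_load_def
      using continuous_map_sum_paths[of "{P\<in>paths. e \<in> set P}" "\<lambda>_. 1"]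
      by (intro closedin_continuous_map_preimage) (auto simp: closed_closedin[symmetric])
    then show ?thesis
      unfolding capacities_def by (intro closedin_Inter) (use closedin_topspace[of flow_topology] in auto)
  qed
  ultimately show ?thesis by (simp add: compact_Int_closedin)
qed

lemma uniform_value_attains_max:
  obtains x where "flow_feasible G s t u x"
    and "\<forall>x'. flow_feasible G s t u x' \<longrightarrow> uniform_value x' \<le> uniform_value x"
proof -
  define K where "K = {x \<in> topspace flow_topology. flow_feasible G s t u x}"
  have restrict_in_K: "restrict x paths \<in> K" if "flow_feasible G s t u x" for x
    using that by (simp add: K_def restrict_paths_invariant)
  have "flow_feasible G s t u (\<lambda>_. 0)"
    using u_nonneg by (simp add: flow_feasible_def arc_load_def)
  then have "uniform_value ` K \<noteq> {}" using restrict_in_K by blast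
  moreover have "compact (uniform_value ` K)"
    using image_compactin[OF compactin_feasible_flows continuous_map_uniform_value]
    by (simp add: K_def)
  ultimately obtain x where x: "x \<in> K" and x_max: "\<forall>x'\<in>K. uniform_value x' \<le> uniform_value x"
    using compact_attains_sup[of "uniform_value ` K"] by auto
  show ?thesis
  proof (rule that)
    show "flow_feasible G s t u x" using x by (simp add: K_def)
    show "\<forall>x'. flow_feasible G s t u x' \<longrightarrow> uniform_value x' \<le> uniform_value x"
      using x_max restrict_in_K by (metis restrict_paths_invariant(2))
  qed
qed

end

theorem lemma3:
  fixes G :: "('a,'b) pre_digraph" and s t :: 'a
    and u \<gamma> :: "'b \<Rightarrow> real" and BF BI :: real
  assumes "fin_digraph G" and "s \<in> verts G" and "t \<in> verts G" and "s \<noteq> t"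
    and "\<forall>e\<in>arcs G. 0 \<le> u e" and "\<forall>e\<in>arcs G. 0 \<le> \<gamma> e"
    and "BF > 0" and "BI \<ge> 0"
  shows "\<exists>x c. design_optimal G s t u \<gamma> BF BI x c \<and>
           (\<forall>e\<in>Astar G \<gamma>.
              c e = (if \<exists>P\<in>st_paths G s t. e \<in> set P \<and> x P > 0
                     then BF / Gamma G s t \<gamma> x else 0))"
proof -
  interpret robust_flow_design G s t u \<gamma> BF BI
    using assms by (simp add: robust_flow_design_def)
  obtain x where x: "flow_feasible G s t u x"
    and x_max: "\<forall>x'. flow_feasible G s t u x' \<longrightarrow> uniform_value x' \<le> uniform_value x"
    by (rule uniform_value_attains_max)
  have "design_optimal G s t u \<gamma> BF BI x (uniform_cost x)"
    unfolding design_optimal_def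
  proof (intro conjI allI impI)
    show "design_feasible G s t u \<gamma> BF x (uniform_cost x)"
      using x by (rule design_feasible_uniform_cost)
    fix x' c' assume "design_feasible G s t u \<gamma> BF x' c'"
    then obtain x'' where "flow_feasible G s t u x''"
      and "robust_val G s t \<gamma> BI x' c' \<le> uniform_value x''"
      by (rule robust_val_le_uniform_value)
    then show "robust_val G s t \<gamma> BI x' c' \<le> robust_val G s t \<gamma> BI x (uniform_cost x)"
      using x_max uniform_value_le_robust_val[OF x] by fastforce
  qed
  then show ?thesis by (intro exI[of _ x] exI[of _ "uniform_cost x"]) (simp add: uniform_cost_def)
qed

end
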